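(* For every integer $n\geqslant3$, the generalized quaternion group $Q_{2^n}=\langle x,y\mid x^{2^{n-1}}=1,\ y^2=x^{2^{n-2}},\ x^y=x^{-1}\rangle$ has a $2$-power-free decomposition.
   Context: The power graph $\mathcal{P}(G)$ of a finite group $G$ has vertex set $G$, two distinct elements being adjacent when one is a power of the other. An $n$-power-free decomposition of $G$ ($n\geqslant1$) is a partition $G=C\uplus B_1\uplus\cdots\uplus B_n$ of $G$ into a cyclic $p$-subgroup $C$ of maximal order (for some prime $p$) and $n$ nonempty subsets $B_1,\ldots,B_n$ such that each $B_i$ is an independent set (pairwise nonadjacent vertices) of $\mathcal{P}(G)$ and $|B_i|>1$ for each $i$. *)

theory Defs
  imports "HOL-Algebra.Algebra"
begin

definition power_adj :: "('a, 'b) monoid_scheme \<Rightarrow> 'a \<Rightarrow> 'a \<Rightarrow> bool" where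
  "power_adj G a b \<longleftrightarrow> a \<noteq> b \<and> ((\<exists>k::nat. a = b [^]\<^bsub>G\<^esub> k) \<or> (\<exists>k::nat. b = a [^]\<^bsub>G\<^esub> k))"

definition power_independent :: "('a, 'b) monoid_scheme \<Rightarrow> 'a set \<Rightarrow> bool" where
  "power_independent G B \<longleftrightarrow> B \<subseteq> carrier G \<and> (\<forall>a\<in>B. \<forall>b\<in>B. \<not> power_adj G a b)"

definition cyclic_subgroup :: "('a, 'b) monoid_scheme \<Rightarrow> 'a set \<Rightarrow> bool" where
  "cyclic_subgroup G C \<longleftrightarrow> subgroup C G \<and> (\<exists>g\<in>C. C = generate G {g})"

definition cyclic_p_subgroup :: "('a, 'b) monoid_scheme \<Rightarrow> nat \<Rightarrow> 'a set \<Rightarrow> bool" where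
  "cyclic_p_subgroup G p C \<longleftrightarrow> Factorial_Ring.prime p \<and> cyclic_subgroup G C \<and> finite C \<and> (\<exists>k::nat. card C = p ^ k)"

definition max_cyclic_p_subgroup :: "('a, 'b) monoid_scheme \<Rightarrow> nat \<Rightarrow> 'a set \<Rightarrow> bool" where
  "max_cyclic_p_subgroup G p C \<longleftrightarrow> cyclic_p_subgroup G p C \<and>
     (\<forall>D. cyclic_p_subgroup G p D \<longrightarrow> card D \<le> card C)"

definition power_free_decomposition ::
    "('a, 'b) monoid_scheme \<Rightarrow> nat \<Rightarrow> 'a set \<Rightarrow> (nat \<Rightarrow> 'a set) \<Rightarrow> bool" where
  "power_free_decomposition G n C B \<longleftrightarrow>
     n \<ge> 1 \<and>
     (\<exists>p. max_cyclic_p_subgroup G p C) \<and>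
     carrier G = C \<union> (\<Union>i\<in>{1..n}. B i) \<and>
     (\<forall>i\<in>{1..n}. C \<inter> B i = {}) \<and>
     (\<forall>i\<in>{1..n}. \<forall>j\<in>{1..n}. i \<noteq> j \<longrightarrow> B i \<inter> B j = {}) \<and>
     (\<forall>i\<in>{1..n}. B i \<noteq> {} \<and> power_independent G (B i) \<and> card (B i) > 1)"

definition has_power_free_decomposition :: "('a, 'b) monoid_scheme \<Rightarrow> nat \<Rightarrow> bool" where
  "has_power_free_decomposition G n \<longleftrightarrow> (\<exists>C B. power_free_decomposition G n C B)"

end

theory Submission
  imports Defs
begin

(* Since y inverts x, every element of G is x^i or x^i y, so G is the union of <x> and the coset
   <x>y; as |G| = 2^n and |<x>| divides 2^(n-1), the element x has order 2^(n-1) and the union is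
   disjoint.  Each b = x^i y squares to the involution z = x^(2^(n-2)), so the powers of b are
   1, b, z and z b = x^(i + 2^(n-2)) y.  Hence the two halves {x^i y | 0 <= i < 2^(n-2)} and
   {x^i y | 2^(n-2) <= i < 2^(n-1)} of the coset are independent sets, and <x> is a cyclic
   2-subgroup of maximal order because 2^(n-1) is the exponent of G. *)

lemma (in group) conj_int_pow:
  assumes "a \<in> carrier G" "c \<in> carrier G"
  shows "inv c \<otimes> a [^] (k::int) \<otimes> c = (inv c \<otimes> a \<otimes> c) [^] k"
proof -
  have "(\<lambda>g. inv c \<otimes> g \<otimes> c) \<in> hom G G"
  proof (rule homI)
    fix g h assume gh: "g \<in> carrier G" "h \<in> carrier G"
    have "(inv c \<otimes> g \<otimes> c) \<otimes> (inv c \<otimes> h \<otimes> c) = inv c \<otimes> g \<otimes> (c \<otimes> inv c) \<otimes> h \<otimes> c"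
      using assms(2) gh by (simp only: m_assoc m_closed inv_closed)
    then show "inv c \<otimes> (g \<otimes> h) \<otimes> c = (inv c \<otimes> g \<otimes> c) \<otimes> (inv c \<otimes> h \<otimes> c)"
      using assms(2) gh by (simp add: m_assoc)
  qed (use assms(2) in simp)
  then show ?thesis
    using hom_int_pow[of _ G G a k] assms(1) is_group by blast
qed

lemma (in group) nat_pow_mod:
  assumes "a \<in> carrier G" "a [^] m = \<one>"
  shows "a [^] (k::nat) = a [^] (k mod m)"
proof -
  have "a [^] k = (a [^] m) [^] (k div m) \<otimes> a [^] (k mod m)"
    using assms(1) by (simp add: nat_pow_pow nat_pow_mult)
  then show ?thesis
    using assms by simp
qed

lemma power_independentI:
  assumes "B \<subseteq> carrier G"
    and "\<And>b k. b \<in> B \<Longrightarrow> b [^]\<^bsub>G\<^esub> (k::nat) \<in> B \<Longrightarrow> b [^]\<^bsub>G\<^esub> k = b"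
  shows "power_independent G B"
  unfolding power_independent_def power_adj_def
  using assms by fastforce

lemma (in group) max_cyclic_p_subgroup_generate:
  assumes "finite (carrier G)" "Factorial_Ring.prime p" "a \<in> carrier G" "ord a = p ^ k"
    and "\<And>g. g \<in> carrier G \<Longrightarrow> g [^] ord a = \<one>"
  shows "max_cyclic_p_subgroup G p (generate G {a})"
  unfolding max_cyclic_p_subgroup_def
proof
  have "finite (generate G {a})"
    using assms(1,3) generate_incl[of "{a}"] finite_subset by simp
  moreover have "card (generate G {a}) = p ^ k"
    using assms(3,4) generate_pow_card by simp
  moreover have "a \<in> generate G {a}"
    by (simp add: generate.incl)
  ultimately show "cyclic_p_subgroup G p (generate G {a})"
    unfolding cyclic_p_subgroup_def cyclic_subgroup_def
    using assms(2,3) generate_is_subgroup[of "{a}"] by auto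
  show "\<forall>D. cyclic_p_subgroup G p D \<longrightarrow> card D \<le> card (generate G {a})"
  proof (intro allI impI)
    fix D assume "cyclic_p_subgroup G p D"
    then obtain g where g: "g \<in> D" "D = generate G {g}" "subgroup D G"
      unfolding cyclic_p_subgroup_def cyclic_subgroup_def by blast
    then have gc: "g \<in> carrier G"
      using subgroup.subset[OF g(3)] by blast
    have "ord g dvd ord a"
      using assms(5)[OF gc] pow_eq_id[OF gc] by simp
    moreover have "ord a > 0"
      using assms(2,4) by (simp add: prime_gt_0_nat)
    ultimately show "card D \<le> card (generate G {a})"
      unfolding g(2) generate_pow_card[OF gc, symmetric] generate_pow_card[OF assms(3), symmetric]
      by (rule dvd_imp_le)
  qed
qed

locale generalized_quaternion = group G for G (structure) +
  fixes n :: nat and x y :: 'a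
  assumes n_ge_3: "n \<ge> 3"
    and x_closed [simp]: "x \<in> carrier G" and y_closed [simp]: "y \<in> carrier G"
    and generate_x_y: "generate G {x, y} = carrier G"
    and x_pow_order: "x [^] ((2::nat) ^ (n - 1)) = \<one>"
    and y_square: "y [^] (2::nat) = x [^] ((2::nat) ^ (n - 2))"
    and y_inverts_x: "inv y \<otimes> x \<otimes> y = inv x"
    and finite_carrier: "finite (carrier G)" and card_carrier: "card (carrier G) = 2 ^ n"
begin

definition half :: nat where "half = 2 ^ (n - 2)"

definition z :: 'a where "z = x [^] half"

definition coset_elt :: "int \<Rightarrow> 'a" where "coset_elt i = x [^] i \<otimes> y"

lemma half_ge_2: "half \<ge> 2"
proof -
  have "(2::nat) ^ 1 \<le> 2 ^ (n - 2)"
    using n_ge_3 by (intro power_increasing) auto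
  then show ?thesis unfolding half_def by simp
qed

lemma n_eq_Suc_Suc: "n = Suc (Suc (n - 2))"
  using n_ge_3 by simp

lemma two_pow_n_minus_1: "(2::nat) ^ (n - 1) = 2 * half"
  unfolding half_def by (subst n_eq_Suc_Suc) simp

lemma card_carrier_half: "card (carrier G) = 4 * half"
  unfolding card_carrier half_def by (subst n_eq_Suc_Suc) simp

lemma coset_elt_closed [simp]: "coset_elt i \<in> carrier G"
  unfolding coset_elt_def by simp

lemma z_closed [simp]: "z \<in> carrier G"
  unfolding z_def by simp

lemma x_pow_2half: "x [^] (2 * half) = \<one>"
  using x_pow_order two_pow_n_minus_1 by simp

lemma y_mult_y: "y \<otimes> y = z"
  using y_square unfolding z_def half_def by (simp add: numeral_2_eq_2)

lemma z_mult_z: "z \<otimes> z = \<one>"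
  unfolding z_def using x_pow_2half by (simp add: nat_pow_mult mult_2)

lemma z_eq_int_pow: "z = x [^] int half"
  unfolding z_def by (simp add: int_pow_int)

lemma x_int_pow_mult_y: "x [^] (k::int) \<otimes> y = y \<otimes> x [^] (-k)"
proof -
  have "inv y \<otimes> x [^] k \<otimes> y = x [^] (-k)"
    using conj_int_pow[OF x_closed y_closed, of k] y_inverts_x by (simp add: int_pow_inv int_pow_neg)
  then have "y \<otimes> (inv y \<otimes> x [^] k \<otimes> y) = y \<otimes> x [^] (-k)" by simp
  then show ?thesis by (simp add: m_assoc[symmetric])
qed

lemma x_int_pow_mult_coset_elt: "x [^] i \<otimes> coset_elt j = coset_elt (i + j)"
  unfolding coset_elt_def by (simp add: int_pow_mult m_assoc)

lemma coset_elt_mult_x_int_pow: "coset_elt i \<otimes> x [^] j = coset_elt (i - j)"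
proof -
  have "coset_elt i \<otimes> x [^] j = x [^] i \<otimes> (x [^] (-j) \<otimes> y)"
    unfolding coset_elt_def using x_int_pow_mult_y[of "-j"] by (simp add: m_assoc)
  then show ?thesis
    unfolding coset_elt_def using int_pow_mult[of x i "-j"] by (simp add: m_assoc[symmetric])
qed

lemma coset_elt_mult_coset_elt: "coset_elt i \<otimes> coset_elt j = x [^] (i - j + int half)"
proof -
  have "coset_elt i \<otimes> coset_elt j = (coset_elt i \<otimes> x [^] j) \<otimes> y"
    unfolding coset_elt_def by (simp add: m_assoc)
  also have "\<dots> = x [^] (i - j) \<otimes> z"
    unfolding coset_elt_mult_x_int_pow by (simp add: coset_elt_def m_assoc y_mult_y)
  finally show ?thesis
    by (simp add: z_eq_int_pow int_pow_mult)
qed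

lemma generate_x: "generate G {x} = range (\<lambda>i::int. x [^] i)"
  unfolding generate_pow[OF x_closed] by auto

lemma carrier_eq: "carrier G = generate G {x} \<union> range coset_elt"
proof
  show "generate G {x} \<union> range coset_elt \<subseteq> carrier G"
    using generate_incl[of "{x}"] by auto
  have "g \<in> range (\<lambda>i::int. x [^] i) \<union> range coset_elt" if "g \<in> generate G {x, y}" for g
    using that
  proof induction
    case one
    show ?case by (metis UnI1 int_pow_0 rangeI)
  next
    case (incl h)
    have "x = x [^] (1::int)" and "y = coset_elt 0"
      unfolding coset_elt_def by simp_all
    then show ?case using incl by blast
  next
    case (inv h)
    have "inv x = x [^] (-1::int)"
      by (simp add: int_pow_neg)
    moreover have "inv y = coset_elt (int half)"
    proof (rule inv_equality)
      show "coset_elt (int half) \<otimes> y = \<one>"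
        unfolding coset_elt_def by (simp add: m_assoc y_mult_y z_mult_z flip: z_eq_int_pow)
    qed simp_all
    ultimately show ?case using inv by blast
  next
    case (eng h1 h2)
    let ?S = "range (\<lambda>i::int. x [^] i) \<union> range coset_elt"
    have "x [^] i \<otimes> x [^] j \<in> ?S" "x [^] i \<otimes> coset_elt j \<in> ?S"
      and "coset_elt i \<otimes> x [^] j \<in> ?S" "coset_elt i \<otimes> coset_elt j \<in> ?S" for i j :: int
      by (simp_all add: x_int_pow_mult_coset_elt coset_elt_mult_x_int_pow coset_elt_mult_coset_elt
          flip: int_pow_mult)
    with eng.IH show ?case
      by (elim UnE rangeE) simp_all
  qed
  then show "carrier G \<subseteq> generate G {x} \<union> range coset_elt"
    unfolding generate_x_y[symmetric] generate_x by blast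
qed

lemma card_generate_x_le: "card (generate G {x}) \<le> 2 * half"
proof -
  have "ord x dvd 2 * half"
    using x_pow_2half pow_eq_id[OF x_closed] by simp
  then show ?thesis
    unfolding generate_pow_card[OF x_closed, symmetric] using half_ge_2 by (simp add: dvd_imp_le)
qed

lemma card_coset_le: "card (range coset_elt) \<le> card (generate G {x})"
proof -
  have "range coset_elt = (\<lambda>g. g \<otimes> y) ` generate G {x}"
    unfolding generate_x coset_elt_def by auto
  moreover have "finite (generate G {x})"
    using generate_incl[of "{x}"] finite_carrier finite_subset by simp
  ultimately show ?thesis by (simp add: card_image_le)
qed

lemma ord_x: "ord x = 2 * half"
  and generate_x_coset_disjoint: "generate G {x} \<inter> range coset_elt = {}"
proof -
  have fin: "finite (generate G {x})" "finite (range coset_elt)"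
    using finite_carrier carrier_eq by (auto intro: finite_subset)
  have "4 * half + card (generate G {x} \<inter> range coset_elt)
        = card (generate G {x}) + card (range coset_elt)"
    using card_Un_Int[OF fin] carrier_eq card_carrier_half by simp
  then have "card (generate G {x}) = 2 * half" "card (generate G {x} \<inter> range coset_elt) = 0"
    using card_generate_x_le card_coset_le by linarith+
  then show "ord x = 2 * half" "generate G {x} \<inter> range coset_elt = {}"
    using generate_pow_card[OF x_closed] fin by auto
qed

lemma coset_elt_eq_iff: "coset_elt i = coset_elt j \<longleftrightarrow> 2 * int half dvd j - i"
  unfolding coset_elt_def using int_pow_eq[OF x_closed, of i j] ord_x by simp

lemma coset_elt_inj_on: "inj_on coset_elt {a ..< a + 2 * int half}"
proof (rule inj_onI)
  fix i j assume "i \<in> {a ..< a + 2 * int half}" "j \<in> {a ..< a + 2 * int half}"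
    and "coset_elt i = coset_elt j"
  then have "2 * int half dvd j - i" and "\<bar>j - i\<bar> < 2 * int half"
    using coset_elt_eq_iff by auto
  then show "i = j"
    using dvd_imp_le_int[of "j - i" "2 * int half"] by fastforce
qed

lemma z_mult_coset_elt: "z \<otimes> coset_elt i = coset_elt (i + int half)"
  unfolding z_eq_int_pow x_int_pow_mult_coset_elt by (simp add: add.commute)

lemma coset_elt_square: "coset_elt i [^] (2::nat) = z"
  using coset_elt_mult_coset_elt[of i i] by (simp add: numeral_2_eq_2 z_eq_int_pow)

lemma coset_elt_pow_4: "coset_elt i [^] (4::nat) = \<one>"
proof -
  have "coset_elt i [^] (4::nat) = (coset_elt i [^] (2::nat)) [^] (2::nat)"
    by (simp add: nat_pow_pow)
  also have "\<dots> = \<one>"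
    unfolding coset_elt_square by (simp add: numeral_2_eq_2 z_mult_z)
  finally show ?thesis .
qed

lemma coset_elt_pow: "coset_elt i [^] (k::nat) \<in> {\<one>, coset_elt i, z, coset_elt (i + int half)}"
proof -
  have pow3: "coset_elt i [^] (3::nat) = coset_elt (i + int half)"
    using coset_elt_square z_mult_coset_elt by (simp add: numeral_3_eq_3 numeral_2_eq_2)
  have "coset_elt i [^] k = coset_elt i [^] (k mod 4)"
    by (rule nat_pow_mod) (simp_all add: coset_elt_pow_4)
  moreover have "k mod 4 \<in> {0, 1, 2, 3}"
    by auto
  ultimately show ?thesis
    using coset_elt_square pow3 by auto
qed

lemma four_dvd_2half: "4 dvd 2 * half"
proof -
  have "even half"
    unfolding half_def using n_ge_3 by simp
  then show ?thesis by auto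
qed

lemma pow_ord_x_eq_one:
  assumes "g \<in> carrier G"
  shows "g [^] ord x = \<one>"
proof -
  consider i where "g = x [^] (i::int)" | i where "g = coset_elt i"
    using assms carrier_eq generate_x by blast
  then show ?thesis
  proof cases
    case 1
    have "g [^] ord x = x [^] (i * int (ord x))"
      unfolding 1 by (simp add: int_pow_pow flip: int_pow_int)
    then show ?thesis
      using int_pow_eq_id[OF x_closed] by simp
  next
    case 2
    have "g [^] ord x = g [^] (ord x mod 4)"
      unfolding 2 by (rule nat_pow_mod) (simp_all add: coset_elt_pow_4)
    then show ?thesis
      using four_dvd_2half ord_x by simp
  qed
qed

definition block :: "int \<Rightarrow> 'a set" where "block a = coset_elt ` {a ..< a + int half}"

lemma card_block: "card (block a) = half"
proof -
  have "inj_on coset_elt {a ..< a + int half}"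
    by (rule inj_on_subset[OF coset_elt_inj_on]) auto
  then show ?thesis
    unfolding block_def by (simp add: card_image)
qed

lemma block_Int_shift: "block a \<inter> block (a + int half) = {}"
proof -
  have "block a \<inter> block (a + int half)
        = coset_elt ` ({a ..< a + int half} \<inter> {a + int half ..< a + int half + int half})"
    unfolding block_def by (rule inj_on_image_Int[OF coset_elt_inj_on, symmetric]) auto
  then show ?thesis by simp
qed

lemma block_Un_shift: "block a \<union> block (a + int half) = range coset_elt"
proof
  show "range coset_elt \<subseteq> block a \<union> block (a + int half)"
  proof
    fix g assume "g \<in> range coset_elt"
    then obtain k where g: "g = coset_elt k" by blast
    define r where "r = (k - a) mod (2 * int half)"
    have r_bounds: "0 \<le> r" "r < 2 * int half"
      unfolding r_def using half_ge_2 by simp_all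
    have "2 * int half dvd (k - a) - r"
      unfolding r_def by (rule dvd_minus_mod)
    then have "g = coset_elt (a + r)"
      unfolding g coset_elt_eq_iff by (simp add: dvd_diff_commute algebra_simps)
    moreover have "a + r \<in> {a ..< a + int half} \<union> {a + int half ..< a + int half + int half}"
      using r_bounds by auto
    ultimately show "g \<in> block a \<union> block (a + int half)"
      unfolding block_def by blast
  qed
qed (auto simp: block_def)

lemma block_subset: "block a \<subseteq> range coset_elt"
  unfolding block_def by blast

lemma power_independent_block: "power_independent G (block a)"
proof (rule power_independentI)
  show "block a \<subseteq> carrier G"
    using block_subset[of a] by auto
  fix b k assume "b \<in> block a" and pow_in_block: "b [^] (k::nat) \<in> block a"
  then obtain i where b: "b = coset_elt i" and i: "i \<in> {a ..< a + int half}"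
    unfolding block_def by blast
  have "g \<notin> block a" if "g \<in> generate G {x}" for g
    using that block_subset generate_x_coset_disjoint by blast
  then have "\<one> \<notin> block a" "z \<notin> block a"
    unfolding generate_x z_eq_int_pow by (metis int_pow_0 rangeI)+
  moreover have "coset_elt (i + int half) \<notin> block a"
  proof
    assume "coset_elt (i + int half) \<in> block a"
    then obtain j where "j \<in> {a ..< a + int half}" "coset_elt (i + int half) = coset_elt j"
      unfolding block_def by blast
    then show False
      using i inj_onD[OF coset_elt_inj_on[of a], of "i + int half" j] by auto
  qed
  moreover have "b [^] k \<in> {\<one>, b, z, coset_elt (i + int half)}"
    unfolding b by (rule coset_elt_pow)
  ultimately show "b [^] k = b"
    using pow_in_block by (metis empty_iff insertE)
qed

theorem has_power_free_decomposition_2: "has_power_free_decomposition G 2"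
proof -
  define B where "B = (\<lambda>i::nat. if i = 1 then block 0 else block (int half))"
  have B: "B 1 = block 0" "B 2 = block (0 + int half)" and indices: "{1..2::nat} = {1, 2}"
    unfolding B_def by auto
  have "ord x = 2 ^ (n - 1)"
    using ord_x two_pow_n_minus_1 by simp
  then have "max_cyclic_p_subgroup G 2 (generate G {x})"
    using max_cyclic_p_subgroup_generate finite_carrier pow_ord_x_eq_one by simp
  moreover have "carrier G = generate G {x} \<union> (\<Union>i\<in>{1..2}. B i)"
    unfolding indices using carrier_eq block_Un_shift[of 0] B by auto
  moreover have "generate G {x} \<inter> B i = {}" for i
    unfolding B_def using generate_x_coset_disjoint block_subset[of 0] block_subset[of "int half"]
    by auto
  moreover have "B 1 \<inter> B 2 = {}"
    unfolding B by (rule block_Int_shift)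
  moreover have "B i \<noteq> {} \<and> power_independent G (B i) \<and> card (B i) > 1" for i
    unfolding B_def using power_independent_block card_block[of 0] card_block[of "int half"] half_ge_2
    by auto
  ultimately have "power_free_decomposition G 2 (generate G {x}) B"
    unfolding power_free_decomposition_def indices by (auto simp: Int_commute)
  then show ?thesis
    unfolding has_power_free_decomposition_def by blast
qed

end

theorem proposition3p6:
  fixes G :: "('a, 'b) monoid_scheme" and n :: nat and x y :: 'a
  assumes "group G"
    and "n \<ge> 3"
    and "x \<in> carrier G" and "y \<in> carrier G"
    and "generate G {x, y} = carrier G"
    and "x [^]\<^bsub>G\<^esub> ((2::nat) ^ (n - 1)) = \<one>\<^bsub>G\<^esub>"
    and "y [^]\<^bsub>G\<^esub> (2::nat) = x [^]\<^bsub>G\<^esub> ((2::nat) ^ (n - 2))"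
    and "inv\<^bsub>G\<^esub> y \<otimes>\<^bsub>G\<^esub> x \<otimes>\<^bsub>G\<^esub> y = inv\<^bsub>G\<^esub> x"
    and "finite (carrier G)" and "card (carrier G) = 2 ^ n"
  shows "has_power_free_decomposition G 2"
proof -
  interpret generalized_quaternion G n x y
    using assms unfolding generalized_quaternion_def generalized_quaternion_axioms_def by blast
  show ?thesis
    by (rule has_power_free_decomposition_2)
qed

end
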